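(* Let $G$ be a graph and $\phi\colon E(G)\to\{\mathrm{red},\mathrm{blue}\}$ a $2$-edge coloring. Let $C$ be an alternating cycle in $\phi$, and let $\phi'$ be obtained from $\phi$ by inverting $C$. Then for each $\gamma\in\{\mathrm{red},\mathrm{blue}\}$, the set of conflicting edges of $G_{\gamma,\phi'}$ is a subset of the set of conflicting edges of $G_{\gamma,\phi}$.
   Context: All graphs are finite and simple. For a coloring $\phi$ and color $\gamma$, $G_{\gamma,\phi}=(V(G),\phi^{-1}(\gamma))$ is the spanning subgraph of edges of color $\gamma$. An edge $uv$ of a graph $H$ is conflicting in $H$ if $d_H(u)=d_H(v)$. An even cycle $C=(u_1,\ldots,u_k,u_{k+1}=u_1)$ of $G$ is an alternating cycle in $\phi$ if $\phi(u_iu_{i+1})\ne\phi(u_{i+1}u_{i+2})$ for all $1\le i<k$, and for every $1\le i\le k$, letting $\bar\gamma$ be the color different from $\phi(u_iu_{i+1})$, one has $d_{G_{\bar\gamma,\phi}}(u_i)\ne d_{G_{\bar\gamma,\phi}}(u_{i+1})$. The coloring obtained from $\phi$ by inverting $C$ is the coloring $\phi'$ with $\phi'(e)$ equal to the color other than $\phi(e)$ for $e\in E(C)$ and $\phi'(e)=\phi(e)$ otherwise. *)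

theory Defs
  imports Main
begin

datatype color = Red | Blue

fun other :: "color \<Rightarrow> color" where
  "other Red = Blue" | "other Blue = Red"

definition simple_graph :: "'a set \<Rightarrow> 'a set set \<Rightarrow> bool" where
  "simple_graph V E \<longleftrightarrow> finite V \<and> (\<forall>e\<in>E. \<exists>u v. e = {u, v} \<and> u \<noteq> v \<and> u \<in> V \<and> v \<in> V)"

text \<open>Edge set of the spanning subgraph G_{gamma,phi}.\<close>
definition color_edges :: "'a set set \<Rightarrow> ('a set \<Rightarrow> color) \<Rightarrow> color \<Rightarrow> 'a set set" where
  "color_edges E phi g = {e \<in> E. phi e = g}"

definition deg :: "'a set set \<Rightarrow> 'a \<Rightarrow> nat" where
  "deg F v = card {e \<in> F. v \<in> e}"

definition conflicting_edges :: "'a set set \<Rightarrow> 'a set set" where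
  "conflicting_edges F = {e \<in> F. \<exists>u v. e = {u, v} \<and> deg F u = deg F v}"

text \<open>A cycle (u_1,...,u_k,u_1) represented by the list [u_1,...,u_k], indices mod k.\<close>
definition cyc_vert :: "'a list \<Rightarrow> nat \<Rightarrow> 'a" where
  "cyc_vert us i = us ! (i mod length us)"

definition cyc_edge :: "'a list \<Rightarrow> nat \<Rightarrow> 'a set" where
  "cyc_edge us i = {cyc_vert us i, cyc_vert us (Suc i)}"

definition cycle_edges :: "'a list \<Rightarrow> 'a set set" where
  "cycle_edges us = {cyc_edge us i | i. i < length us}"

definition is_cycle :: "'a set set \<Rightarrow> 'a list \<Rightarrow> bool" where
  "is_cycle E us \<longleftrightarrow> length us \<ge> 3 \<and> distinct us \<and> (\<forall>i < length us. cyc_edge us i \<in> E)"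

definition even_cycle :: "'a set set \<Rightarrow> 'a list \<Rightarrow> bool" where
  "even_cycle E us \<longleftrightarrow> is_cycle E us \<and> even (length us)"

text \<open>Alternating cycle; list index i (0-based) corresponds to u_{i+1}.\<close>
definition alternating_cycle :: "'a set set \<Rightarrow> ('a set \<Rightarrow> color) \<Rightarrow> 'a list \<Rightarrow> bool" where
  "alternating_cycle E phi us \<longleftrightarrow> even_cycle E us
     \<and> (\<forall>i. i + 1 < length us \<longrightarrow> phi (cyc_edge us i) \<noteq> phi (cyc_edge us (Suc i)))
     \<and> (\<forall>i < length us.
          deg (color_edges E phi (other (phi (cyc_edge us i)))) (cyc_vert us i)
          \<noteq> deg (color_edges E phi (other (phi (cyc_edge us i)))) (cyc_vert us (Suc i)))"

definition invert_cycle :: "('a set \<Rightarrow> color) \<Rightarrow> 'a list \<Rightarrow> ('a set \<Rightarrow> color)" where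
  "invert_cycle phi us = (\<lambda>e. if e \<in> cycle_edges us then other (phi e) else phi e)"

end

theory Submission
  imports Defs
begin

text \<open>Inverting an alternating cycle preserves the degree of every vertex in each colour
class: a vertex off the cycle keeps all its edge colours, and a vertex on the cycle lies on
exactly two cycle edges, of opposite colours, which swap colours. Hence an edge off the cycle
is conflicting after the inversion only if it was before. An edge of the cycle changes
colour from \<open>\<gamma>\<close> to \<open>other \<gamma>\<close>, and by the definition of alternating cycles its ends have
different degrees in colour \<open>other \<gamma>\<close> before, hence also after, the inversion.\<close>

lemma other_other [simp]: "other (other c) = c"
  by (cases c) auto

lemma other_neq [simp]: "other c \<noteq> c" "c \<noteq> other c"
  by (cases c; simp)+

lemma eq_other_if_neq: "a \<noteq> b \<Longrightarrow> b = other a"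
  by (cases a; cases b) auto

lemma simple_graph_finite_edges:
  assumes "simple_graph V E"
  shows "finite E"
proof -
  have "E \<subseteq> Pow V"
    using assms unfolding simple_graph_def by fastforce
  moreover have "finite V"
    using assms unfolding simple_graph_def by simp
  ultimately show ?thesis
    by (meson finite_Pow_iff finite_subset)
qed

lemma deg_recolor_eq:
  assumes "finite E"
    and balanced: "card {e \<in> E \<inter> R. v \<in> e \<and> phi e = other g} = card {e \<in> E \<inter> R. v \<in> e \<and> phi e = g}"
  shows "deg (color_edges E (\<lambda>e. if e \<in> R then other (phi e) else phi e) g) v
       = deg (color_edges E phi g) v"
proof -
  let ?Out = "{e \<in> E - R. v \<in> e \<and> phi e = g}"
  have "{e \<in> color_edges E (\<lambda>e. if e \<in> R then other (phi e) else phi e) g. v \<in> e}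
      = ?Out \<union> {e \<in> E \<inter> R. v \<in> e \<and> phi e = other g}"
    unfolding color_edges_def by (auto split: if_splits)
  moreover have "{e \<in> color_edges E phi g. v \<in> e} = ?Out \<union> {e \<in> E \<inter> R. v \<in> e \<and> phi e = g}"
    unfolding color_edges_def by auto
  ultimately show ?thesis
    unfolding deg_def using assms by (simp add: card_Un_disjoint disjoint_iff)
qed

lemma cyc_edge_mod [simp]: "cyc_edge us (i mod length us) = cyc_edge us i"
  unfolding cyc_edge_def cyc_vert_def by (simp add: mod_Suc_eq)

lemma cyc_edge_in_cycle_edges:
  assumes "us \<noteq> []"
  shows "cyc_edge us i \<in> cycle_edges us"
proof -
  have "i mod length us < length us"
    using assms by simp
  then show ?thesis
    unfolding cycle_edges_def by (metis (mono_tags, lifting) cyc_edge_mod mem_Collect_eq)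
qed

lemma is_cycle_cyc_edge_in_edges:
  assumes "is_cycle E us"
  shows "cyc_edge us i \<in> E"
proof -
  have "i mod length us < length us"
    using assms unfolding is_cycle_def by (intro mod_less_divisor) linarith
  then show ?thesis
    using assms unfolding is_cycle_def by (metis cyc_edge_mod)
qed

lemma alternating_cycle_color_parity:
  assumes "alternating_cycle E phi us" "i < length us"
  shows "phi (cyc_edge us i) = (if even i then phi (cyc_edge us 0) else other (phi (cyc_edge us 0)))"
  using assms(2)
proof (induction i)
  case (Suc i)
  have "phi (cyc_edge us i) \<noteq> phi (cyc_edge us (Suc i))"
    using assms(1) Suc.prems unfolding alternating_cycle_def by auto
  with Suc show ?case
    by (auto dest: eq_other_if_neq)
qed simp

text \<open>Unlike the alternation condition of \<^const>\<open>alternating_cycle\<close>, this also covers the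
closing edge \<open>i = length us - 1\<close>; here the even length of the cycle is needed.\<close>

lemma alternating_cycle_next_color:
  assumes alt: "alternating_cycle E phi us" and "i < length us"
  shows "phi (cyc_edge us (Suc i)) = other (phi (cyc_edge us i))"
proof (cases "Suc i < length us")
  case True
  then show ?thesis
    using alternating_cycle_color_parity[OF alt] assms(2) by auto
next
  case False
  then have "Suc i = length us" "even (length us)"
    using assms alt unfolding alternating_cycle_def even_cycle_def by auto
  then have "odd i" "cyc_edge us (Suc i) = cyc_edge us 0"
    using cyc_edge_mod[of us "Suc i"] by (simp_all add: even_Suc[symmetric])
  then show ?thesis
    using alternating_cycle_color_parity[OF alt assms(2)] by simp
qed

lemma cycle_vertex_succ:
  assumes "v \<in> set us"
  shows "\<exists>p < length us. v = cyc_vert us (Suc p)"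
proof -
  obtain j where j: "j < length us" "v = us ! j"
    using assms by (auto simp: in_set_conv_nth)
  then obtain p where "p < length us" "Suc p mod length us = j"
    by (metis Suc_leD Suc_le_D Suc_le_eq less_Suc_eq mod_less mod_self not0_implies_Suc)
  with j show ?thesis
    unfolding cyc_vert_def by blast
qed

lemma cycle_edges_at_vertex:
  assumes "is_cycle E us" "p < length us"
  shows "{e \<in> cycle_edges us. cyc_vert us (Suc p) \<in> e} = {cyc_edge us p, cyc_edge us (Suc p)}"
proof -
  let ?k = "length us"
  have dist: "distinct us" and k: "?k \<ge> 3"
    using assms(1) unfolding is_cycle_def by auto
  have "e = cyc_edge us p \<or> e = cyc_edge us (Suc p)"
    if i: "i < ?k" "e = cyc_edge us i" and v: "cyc_vert us (Suc p) \<in> e" for e i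
  proof -
    have "us ! (Suc p mod ?k) = us ! i \<or> us ! (Suc p mod ?k) = us ! (Suc i mod ?k)"
      using i v unfolding cyc_edge_def cyc_vert_def by auto
    moreover have "Suc p mod ?k < ?k" "Suc i mod ?k < ?k"
      using k by (intro mod_less_divisor; linarith)+
    ultimately have "Suc p mod ?k = i \<or> Suc p mod ?k = Suc i mod ?k"
      using nth_eq_iff_index_eq[OF dist] i(1) by blast
    moreover have "i = p" if "Suc p mod ?k = Suc i mod ?k"
      using that i(1) assms(2) by (metis mod_Suc mod_if nat.distinct(1) nat.inject)
    ultimately show ?thesis
      using i cyc_edge_mod[of us "Suc p"] by auto
  qed
  moreover have "cyc_edge us p \<in> cycle_edges us" "cyc_edge us (Suc p) \<in> cycle_edges us"
    using assms(2) by (auto intro: cyc_edge_in_cycle_edges)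
  ultimately show ?thesis
    unfolding cycle_edges_def by (auto simp: cyc_edge_def)
qed

lemma cycle_edges_avoid_other_vertices:
  assumes "v \<notin> set us" "e \<in> cycle_edges us"
  shows "v \<notin> e"
  using assms unfolding cycle_edges_def cyc_edge_def cyc_vert_def
  by (auto, metis length_pos_if_in_set mod_less_divisor nth_mem)+

lemma card_opposite_pair_color_class:
  assumes "phi b = other (phi a)"
  shows "card {e \<in> {a, b}. phi e = c} = 1"
proof (cases "phi a = c")
  case True
  with assms have "{e \<in> {a, b}. phi e = c} = {a}"
    by auto
  then show ?thesis by simp
next
  case False
  with assms have "{e \<in> {a, b}. phi e = c} = {b}"
    by (auto dest: eq_other_if_neq)
  then show ?thesis by simp
qed

lemma deg_invert_alternating_cycle:
  assumes "finite E" and alt: "alternating_cycle E phi us"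
  shows "deg (color_edges E (invert_cycle phi us) g) v = deg (color_edges E phi g) v"
  unfolding invert_cycle_def
proof (rule deg_recolor_eq[OF assms(1)])
  have cyc: "is_cycle E us"
    using alt unfolding alternating_cycle_def even_cycle_def by simp
  show "card {e \<in> E \<inter> cycle_edges us. v \<in> e \<and> phi e = other g}
      = card {e \<in> E \<inter> cycle_edges us. v \<in> e \<and> phi e = g}"
  proof (cases "v \<in> set us")
    case True
    then obtain p where p: "p < length us" "v = cyc_vert us (Suc p)"
      by (blast dest: cycle_vertex_succ)
    let ?a = "cyc_edge us p" and ?b = "cyc_edge us (Suc p)"
    have "?a \<in> E" "?b \<in> E"
      using cyc by (rule is_cycle_cyc_edge_in_edges)+
    then have "{e \<in> E \<inter> cycle_edges us. v \<in> e} = {?a, ?b}"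
      using cycle_edges_at_vertex[OF cyc p(1)] p(2) by blast
    then have "{e \<in> E \<inter> cycle_edges us. v \<in> e \<and> phi e = c} = {e \<in> {?a, ?b}. phi e = c}" for c
      by blast
    with card_opposite_pair_color_class[of phi, OF alternating_cycle_next_color[OF alt p(1)]]
    show ?thesis
      by simp
  next
    case False
    then have "{e \<in> E \<inter> cycle_edges us. v \<in> e \<and> phi e = c} = {}" for c
      by (auto dest: cycle_edges_avoid_other_vertices)
    then show ?thesis
      by (simp only:)
  qed
qed

lemma alternating_cycle_edge_not_conflicting:
  assumes "finite E" and alt: "alternating_cycle E phi us" and "e \<in> cycle_edges us"
  shows "e \<notin> conflicting_edges (color_edges E (invert_cycle phi us) (other (phi e)))"
proof
  let ?F = "color_edges E (invert_cycle phi us) (other (phi e))"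
  assume "e \<in> conflicting_edges ?F"
  then obtain u v where uv: "e = {u, v}" "deg ?F u = deg ?F v"
    unfolding conflicting_edges_def by blast
  obtain i where i: "i < length us" "e = cyc_edge us i"
    using assms(3) unfolding cycle_edges_def by blast
  have "deg ?F (cyc_vert us i) \<noteq> deg ?F (cyc_vert us (Suc i))"
    using alt i unfolding deg_invert_alternating_cycle[OF assms(1) alt] alternating_cycle_def
    by blast
  with uv i show False
    unfolding cyc_edge_def by (auto simp: doubleton_eq_iff)
qed

theorem lemma2p6:
  fixes V :: "'a set" and E :: "'a set set" and phi :: "'a set \<Rightarrow> color" and us :: "'a list"
  assumes "simple_graph V E"
    and "alternating_cycle E phi us"
  shows "\<forall>g. conflicting_edges (color_edges E (invert_cycle phi us) g)
             \<subseteq> conflicting_edges (color_edges E phi g)"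
proof (intro allI subsetI)
  fix g e
  assume conf: "e \<in> conflicting_edges (color_edges E (invert_cycle phi us) g)"
  have finE: "finite E"
    using assms(1) by (rule simple_graph_finite_edges)
  have e: "e \<in> E" "invert_cycle phi us e = g"
    using conf unfolding conflicting_edges_def color_edges_def by auto
  have "e \<notin> cycle_edges us"
  proof
    assume cyc: "e \<in> cycle_edges us"
    then have "g = other (phi e)"
      using e(2) unfolding invert_cycle_def by simp
    with conf alternating_cycle_edge_not_conflicting[OF finE assms(2) cyc] show False
      by simp
  qed
  with e have "e \<in> color_edges E phi g"
    unfolding color_edges_def invert_cycle_def by simp
  then show "e \<in> conflicting_edges (color_edges E phi g)"
    using conf unfolding conflicting_edges_def deg_invert_alternating_cycle[OF finE assms(2)]
    by blast
qed

end
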